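(* Let $(\mathfrak{h},\langle\cdot,\cdot\rangle)$ be a Kundt pair on the Heisenberg Lie algebra $\mathfrak{n}$. Then it is equivalent to $(\mathfrak{h}_0,\langle\cdot,\cdot\rangle_0)$ where either (1) the matrix of $\langle\cdot,\cdot\rangle_0$ in the basis $(X_1,X_2,X_3)$ is $\begin{pmatrix}1&0&0\\0&-1&0\\0&0&\mu\end{pmatrix}$ with $\mu>0$, and $\mathfrak{h}_0=\mathrm{span}\{X_1+X_2,X_3\}$ or $\mathfrak{h}_0=\mathrm{span}\{X_1-X_2,X_3\}$; or (2) the matrix of $\langle\cdot,\cdot\rangle_0$ in the basis $(X_1,X_2,X_3)$ is $\begin{pmatrix}1&0&0\\0&0&1\\0&1&0\end{pmatrix}$ and $\mathfrak{h}_0=\mathrm{span}\{X_1,X_3\}$.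
   Context: $\mathfrak{n}$ has basis $(X_1,X_2,X_3)$ with only nonzero bracket $[X_1,X_2]=X_3$. For a Lorentzian scalar product $\langle\cdot,\cdot\rangle$ on a Lie algebra $\mathfrak{g}$, the Levi-Civita product is defined by $2\langle u\bullet v,w\rangle=\langle[u,v],w\rangle+\langle[w,u],v\rangle+\langle[w,v],u\rangle$. A Kundt pair on $\mathfrak{g}$ is a pair consisting of a Lorentzian scalar product $\langle\cdot,\cdot\rangle$ and a codimension one subalgebra $\mathfrak{h}$ which is $\langle\cdot,\cdot\rangle$-degenerate, stable by $\bullet$, and such that $e\bullet e=0$ for all $e\in\mathfrak{h}^\perp$. Two Kundt pairs $(\mathfrak{h}_1,\langle\cdot,\cdot\rangle_1)$, $(\mathfrak{h}_2,\langle\cdot,\cdot\rangle_2)$ are equivalent if there is a Lie algebra automorphism $\phi$ of $\mathfrak{g}$ with $\phi(\mathfrak{h}_1)=\mathfrak{h}_2$ and $\phi^*\langle\cdot,\cdot\rangle_2=\langle\cdot,\cdot\rangle_1$. *)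

theory Defs
  imports "HOL-Analysis.Analysis"
begin

definition sym_bilinear :: "('a::real_vector \<Rightarrow> 'a \<Rightarrow> real) \<Rightarrow> bool" where
  "sym_bilinear g \<longleftrightarrow> bilinear g \<and> (\<forall>u v. g u v = g v u)"

definition lorentzian :: "('a::euclidean_space \<Rightarrow> 'a \<Rightarrow> real) \<Rightarrow> bool" where
  "lorentzian g \<longleftrightarrow> sym_bilinear g \<and>
     (\<exists>B t. independent B \<and> span B = UNIV \<and> t \<in> B \<and> g t t = -1 \<and>
        (\<forall>b\<in>B - {t}. g b b = 1) \<and>
        (\<forall>b\<in>B. \<forall>c\<in>B. b \<noteq> c \<longrightarrow> g b c = 0))"

definition lc_prod :: "('a \<Rightarrow> 'a \<Rightarrow> 'a) \<Rightarrow> ('a \<Rightarrow> 'a \<Rightarrow> real) \<Rightarrow> 'a \<Rightarrow> 'a \<Rightarrow> 'a" where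
  "lc_prod br g u v = (THE x. \<forall>w. 2 * g x w = g (br u v) w + g (br w u) v + g (br w v) u)"

definition orth_compl :: "('a \<Rightarrow> 'a \<Rightarrow> real) \<Rightarrow> 'a set \<Rightarrow> 'a set" where
  "orth_compl g H = {e. \<forall>u\<in>H. g e u = 0}"

definition codim1_subalgebra :: "('a::euclidean_space \<Rightarrow> 'a \<Rightarrow> 'a) \<Rightarrow> 'a set \<Rightarrow> bool" where
  "codim1_subalgebra br H \<longleftrightarrow> subspace H \<and> dim H + 1 = DIM('a) \<and>
     (\<forall>u\<in>H. \<forall>v\<in>H. br u v \<in> H)"

definition degenerate_on :: "('a::real_vector \<Rightarrow> 'a \<Rightarrow> real) \<Rightarrow> 'a set \<Rightarrow> bool" where
  "degenerate_on g H \<longleftrightarrow> (\<exists>u\<in>H. u \<noteq> 0 \<and> (\<forall>w\<in>H. g u w = 0))"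

definition kundt_pair :: "('a::euclidean_space \<Rightarrow> 'a \<Rightarrow> 'a) \<Rightarrow> 'a set \<Rightarrow> ('a \<Rightarrow> 'a \<Rightarrow> real) \<Rightarrow> bool" where
  "kundt_pair br H g \<longleftrightarrow> lorentzian g \<and> codim1_subalgebra br H \<and> degenerate_on g H \<and>
     (\<forall>u\<in>H. \<forall>v\<in>H. lc_prod br g u v \<in> H) \<and>
     (\<forall>e\<in>orth_compl g H. lc_prod br g e e = 0)"

definition lie_automorphism :: "('a::real_vector \<Rightarrow> 'a \<Rightarrow> 'a) \<Rightarrow> ('a \<Rightarrow> 'a) \<Rightarrow> bool" where
  "lie_automorphism br \<phi> \<longleftrightarrow> linear \<phi> \<and> bij \<phi> \<and> (\<forall>u v. \<phi> (br u v) = br (\<phi> u) (\<phi> v))"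

definition kundt_equivalent ::
  "('a::euclidean_space \<Rightarrow> 'a \<Rightarrow> 'a) \<Rightarrow> 'a set \<Rightarrow> ('a \<Rightarrow> 'a \<Rightarrow> real) \<Rightarrow> 'a set \<Rightarrow> ('a \<Rightarrow> 'a \<Rightarrow> real) \<Rightarrow> bool" where
  "kundt_equivalent br H1 g1 H2 g2 \<longleftrightarrow>
     (\<exists>\<phi>. lie_automorphism br \<phi> \<and> \<phi> ` H1 = H2 \<and> (\<forall>u v. g2 (\<phi> u) (\<phi> v) = g1 u v))"

definition X1 :: "real^3" where "X1 = axis 1 1"
definition X2 :: "real^3" where "X2 = axis 2 1"
definition X3 :: "real^3" where "X3 = axis 3 1"

definition heis_br :: "real^3 \<Rightarrow> real^3 \<Rightarrow> real^3" where
  "heis_br u v = (u$1 * v$2 - u$2 * v$1) *\<^sub>R X3"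

definition form1 :: "real \<Rightarrow> real^3 \<Rightarrow> real^3 \<Rightarrow> real" where
  "form1 \<mu> u v = u$1 * v$1 - u$2 * v$2 + \<mu> * u$3 * v$3"

definition form2 :: "real^3 \<Rightarrow> real^3 \<Rightarrow> real" where
  "form2 u v = u$1 * v$1 + u$2 * v$3 + u$3 * v$2"

end

theory Submission
  imports Defs
begin

text \<open>A codimension one subalgebra H of the Heisenberg algebra contains the centre spanned by X3,
  and degeneracy gives a nonzero e in H orthogonal to all of H. For any p, q with [p,q] nonzero,
  X1, X2, X3 |-> p, q, [p,q] is an automorphism, so it suffices to find such p, q whose Gram
  matrix is one of the normal forms and which pull H back to the model subalgebra.
  If e is central, X3 is null and orthogonal to H; a unit vector p in H and a null vector q
  outside H orthogonal to p give form2 once g(q,[p,q]) is normalised to 1. Otherwise X3 is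
  spacelike, e has a null partner f outside H with g(e,f) = 1 and f orthogonal to X3, and
  p = e + f/2, q = e - f/2 give form1 with mu = g([p,q],[p,q]).\<close>

section \<open>Nondegenerate symmetric bilinear forms\<close>

definition nondegenerate :: "('a::real_vector \<Rightarrow> 'a \<Rightarrow> real) \<Rightarrow> bool" where
  "nondegenerate g \<longleftrightarrow> (\<forall>x. (\<forall>w. g x w = 0) \<longrightarrow> x = 0)"

lemma sym_bilinear_simps:
  assumes "sym_bilinear g"
  shows "g (x + y) z = g x z + g y z" "g x (y + z) = g x y + g x z"
    "g (x - y) z = g x z - g y z" "g x (y - z) = g x y - g x z"
    "g (- x) y = - g x y" "g x (- y) = - g x y"
    "g (c *\<^sub>R x) y = c * g x y" "g x (c *\<^sub>R y) = c * g x y"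
    "g y x = g x y"
  using assms unfolding sym_bilinear_def
  by (auto simp: bilinear_ladd bilinear_radd bilinear_lsub bilinear_rsub bilinear_lneg bilinear_rneg
      bilinear_lmul bilinear_rmul)

lemma sym_bilinear_null_shift:
  assumes "sym_bilinear g" and "g z z = 0" and "g v z \<noteq> 0"
  shows "g (v - (g v v / (2 * g v z)) *\<^sub>R z) (v - (g v v / (2 * g v z)) *\<^sub>R z) = 0"
  using assms by (simp add: sym_bilinear_simps[OF assms(1)] field_simps)

lemma subspace_orth_compl:
  assumes "bilinear g"
  shows "subspace (orth_compl g H)"
  unfolding subspace_def orth_compl_def
  by (simp add: bilinear_lzero[OF assms] bilinear_ladd[OF assms] bilinear_lmul[OF assms])

lemma nondegenerate_orth_compl_pairing:
  fixes g :: "'a::euclidean_space \<Rightarrow> 'a \<Rightarrow> real"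
  assumes "bilinear g" and "nondegenerate g" and "subspace H" and "dim H + 1 = DIM('a)"
    and "u \<in> orth_compl g H" and "u \<noteq> 0" and "v \<notin> H"
  shows "g u v \<noteq> 0"
proof
  assume uv: "g u v = 0"
  have span_H: "span H = H" using assms(3) by (simp add: span_eq_iff)
  have "span (insert v H) = UNIV"
    using assms(4,7) by (simp add: dim_eq_full[symmetric] dim_insert span_H)
  have "g u w = 0" for w
  proof -
    obtain k where "w - k *\<^sub>R v \<in> H"
      using \<open>span (insert v H) = UNIV\<close> span_breakdown_eq[of w v H] by (auto simp: span_H)
    then have "g u (w - k *\<^sub>R v) = 0" using assms(5) unfolding orth_compl_def by blast
    with uv show "g u w = 0" by (simp add: bilinear_rsub[OF assms(1)] bilinear_rmul[OF assms(1)])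
  qed
  with assms(2,6) show False unfolding nondegenerate_def by blast
qed

lemma subspace_add_scaleR_mem_iff:
  assumes "subspace H" and "u \<in> H" and "v \<notin> H"
  shows "a *\<^sub>R u + b *\<^sub>R v \<in> H \<longleftrightarrow> b = 0"
proof
  assume "a *\<^sub>R u + b *\<^sub>R v \<in> H"
  then have "(1 / b) *\<^sub>R ((a *\<^sub>R u + b *\<^sub>R v) - a *\<^sub>R u) \<in> H"
    using assms(1,2) by (intro subspace_mul subspace_diff) auto
  with assms(3) show "b = 0" by (cases "b = 0") auto
qed (use assms(1,2) in \<open>simp add: subspace_mul\<close>)

lemma codim1_subalgebra_proper:
  fixes H :: "'a::euclidean_space set"
  assumes "codim1_subalgebra br H"
  obtains b where "b \<notin> H"
proof -
  have "H \<noteq> UNIV" using assms unfolding codim1_subalgebra_def by auto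
  with that show thesis by blast
qed

section \<open>Lorentzian forms in dimension three\<close>

lemma lorentzian_coordinates:
  fixes g :: "'a::euclidean_space \<Rightarrow> 'a \<Rightarrow> real"
  assumes "lorentzian g" and "DIM('a) = 3"
  obtains t b1 b2 where "\<And>x. \<exists>x0 x1 x2. x = x0 *\<^sub>R t + x1 *\<^sub>R b1 + x2 *\<^sub>R b2"
    and "\<And>a0 a1 a2 c0 c1 c2. g (a0 *\<^sub>R t + a1 *\<^sub>R b1 + a2 *\<^sub>R b2) (c0 *\<^sub>R t + c1 *\<^sub>R b1 + c2 *\<^sub>R b2)
                              = - a0 * c0 + a1 * c1 + a2 * c2"
proof -
  obtain B t where ind: "independent B" and sp: "span B = UNIV" and tB: "t \<in> B" and tt: "g t t = -1"
    and one: "\<forall>b\<in>B - {t}. g b b = 1" and orth: "\<forall>b\<in>B. \<forall>c\<in>B. b \<noteq> c \<longrightarrow> g b c = 0"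
    and bl: "bilinear g"
    using assms(1) unfolding lorentzian_def sym_bilinear_def by blast
  have fin: "finite B" using independent_bound[OF ind] by blast
  have "card B = dim (UNIV :: 'a set)"
    by (rule basis_card_eq_dim) (use ind sp in auto)
  with assms(2) tB fin have "card (B - {t}) = 2" by simp
  then obtain b1 b2 where B2: "B - {t} = {b1, b2}" and "b1 \<noteq> b2" by (auto simp: card_2_iff)
  with tB have B: "B = {t, b1, b2}" "t \<noteq> b1" "t \<noteq> b2" "b1 \<noteq> b2" by auto
  show thesis
  proof
    fix x :: 'a
    obtain u where "x = (\<Sum>v\<in>B. u v *\<^sub>R v)" using sp span_finite[OF fin] by auto
    then show "\<exists>x0 x1 x2. x = x0 *\<^sub>R t + x1 *\<^sub>R b1 + x2 *\<^sub>R b2"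
      using B by (auto simp: add.assoc)
  next
    fix a0 a1 a2 c0 c1 c2
    have "g b1 b1 = 1" "g b2 b2 = 1" using one B2 by auto
    moreover have "g t b1 = 0" "g t b2 = 0" "g b1 b2 = 0" "g b1 t = 0" "g b2 t = 0" "g b2 b1 = 0"
      using orth B by auto
    ultimately show "g (a0 *\<^sub>R t + a1 *\<^sub>R b1 + a2 *\<^sub>R b2) (c0 *\<^sub>R t + c1 *\<^sub>R b1 + c2 *\<^sub>R b2)
                       = - a0 * c0 + a1 * c1 + a2 * c2"
      by (simp add: bilinear_ladd[OF bl] bilinear_radd[OF bl] bilinear_lmul[OF bl]
          bilinear_rmul[OF bl] tt)
  qed
qed

lemma lorentzian_nondegenerate:
  fixes g :: "'a::euclidean_space \<Rightarrow> 'a \<Rightarrow> real"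
  assumes "lorentzian g" and "DIM('a) = 3"
  shows "nondegenerate g"
  unfolding nondegenerate_def
proof (intro allI impI)
  fix x :: 'a
  assume x: "\<forall>w. g x w = 0"
  obtain t b1 b2 where cov: "\<And>x. \<exists>x0 x1 x2. x = x0 *\<^sub>R t + x1 *\<^sub>R b1 + x2 *\<^sub>R b2"
    and gram: "\<And>a0 a1 a2 c0 c1 c2. g (a0 *\<^sub>R t + a1 *\<^sub>R b1 + a2 *\<^sub>R b2) (c0 *\<^sub>R t + c1 *\<^sub>R b1 + c2 *\<^sub>R b2)
                              = - a0 * c0 + a1 * c1 + a2 * c2"
    using lorentzian_coordinates[OF assms] by blast
  obtain x0 x1 x2 where xe: "x = x0 *\<^sub>R t + x1 *\<^sub>R b1 + x2 *\<^sub>R b2" using cov by blast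
  have "g x (1 *\<^sub>R t + 0 *\<^sub>R b1 + 0 *\<^sub>R b2) = 0" "g x (0 *\<^sub>R t + 1 *\<^sub>R b1 + 0 *\<^sub>R b2) = 0"
    "g x (0 *\<^sub>R t + 0 *\<^sub>R b1 + 1 *\<^sub>R b2) = 0" using x by auto
  then show "x = 0" unfolding xe gram by simp
qed

lemma lorentzian_causal_orthogonal_in_span:
  fixes g :: "'a::euclidean_space \<Rightarrow> 'a \<Rightarrow> real"
  assumes "lorentzian g" and "DIM('a) = 3"
    and "g x x \<le> 0" and "g y y \<le> 0" and "g x y = 0" and "y \<noteq> 0"
  shows "x \<in> span {y}"
proof -
  obtain t b1 b2 where cov: "\<And>x. \<exists>x0 x1 x2. x = x0 *\<^sub>R t + x1 *\<^sub>R b1 + x2 *\<^sub>R b2"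
    and gram: "\<And>a0 a1 a2 c0 c1 c2. g (a0 *\<^sub>R t + a1 *\<^sub>R b1 + a2 *\<^sub>R b2) (c0 *\<^sub>R t + c1 *\<^sub>R b1 + c2 *\<^sub>R b2)
                              = - a0 * c0 + a1 * c1 + a2 * c2"
    using lorentzian_coordinates[OF assms(1,2)] by blast
  obtain x0 x1 x2 where xe: "x = x0 *\<^sub>R t + x1 *\<^sub>R b1 + x2 *\<^sub>R b2" using cov by blast
  obtain y0 y1 y2 where ye: "y = y0 *\<^sub>R t + y1 *\<^sub>R b1 + y2 *\<^sub>R b2" using cov by blast
  have X: "- x0 * x0 + x1 * x1 + x2 * x2 \<le> 0" using assms(3) unfolding xe gram .
  have Y: "- y0 * y0 + y1 * y1 + y2 * y2 \<le> 0" using assms(4) unfolding ye gram .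
  have XY: "- x0 * y0 + x1 * y1 + x2 * y2 = 0" using assms(5) unfolding xe ye gram .
  have "y0 \<noteq> 0"
  proof
    assume "y0 = 0"
    with Y have "y1 = 0 \<and> y2 = 0" by (simp add: sum_squares_le_zero_iff)
    with \<open>y0 = 0\<close> ye assms(6) show False by simp
  qed
  have "(y0*x1 - x0*y1)\<^sup>2 + (y0*x2 - x0*y2)\<^sup>2 =
      y0\<^sup>2 * (- x0 * x0 + x1 * x1 + x2 * x2) - 2*x0*y0*(- x0 * y0 + x1 * y1 + x2 * y2)
      + x0\<^sup>2 * (- y0 * y0 + y1 * y1 + y2 * y2)"
    by (simp add: algebra_simps power2_eq_square)
  also have "\<dots> \<le> 0" using X Y XY by (simp add: mult_nonneg_nonpos add_nonpos_nonpos)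
  finally have "y0*x1 = x0*y1 \<and> y0*x2 = x0*y2"
    by (simp add: sum_power2_le_zero_iff)
  with \<open>y0 \<noteq> 0\<close> have "x1 = x0 / y0 * y1" "x2 = x0 / y0 * y2"
    by (simp_all add: field_simps)
  with \<open>y0 \<noteq> 0\<close> have "x = (x0 / y0) *\<^sub>R y"
    unfolding xe ye by (simp add: scaleR_add_right)
  then show ?thesis by (simp add: span_mul span_base)
qed

section \<open>The Heisenberg algebra\<close>

lemma X_components [simp]:
  "X1$1 = 1" "X1$2 = 0" "X1$3 = 0" "X2$1 = 0" "X2$2 = 1" "X2$3 = 0" "X3$1 = 0" "X3$2 = 0" "X3$3 = 1"
  by (simp_all add: X1_def X2_def X3_def axis_def)

lemma X3_neq_0 [simp]: "X3 \<noteq> 0"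
  by (metis X_components(9) zero_index zero_neq_one)

lemma heis_br_components [simp]:
  "heis_br u v $ 1 = 0" "heis_br u v $ 2 = 0" "heis_br u v $ 3 = u$1 * v$2 - u$2 * v$1"
  by (simp_all add: heis_br_def)

lemma heis_br_scaleR: "heis_br (a *\<^sub>R u) (b *\<^sub>R v) = (a * b) *\<^sub>R heis_br u v"
  by (simp add: heis_br_def algebra_simps)

lemma span_X3: "span {X3} = {x. x$1 = 0 \<and> x$2 = 0}"
proof -
  have "x$1 = 0 \<Longrightarrow> x$2 = 0 \<Longrightarrow> x = x$3 *\<^sub>R X3" for x :: "real^3"
    by (simp add: vec_eq_iff forall_3)
  then show ?thesis by (auto simp: span_singleton)
qed

lemma heis_br_in_span_X3: "heis_br u v \<in> span {X3}"
  by (simp add: span_X3)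

lemma span_X3_subset:
  assumes "subspace H" and "X3 \<in> H"
  shows "span {X3} \<subseteq> H"
  using assms by (simp add: span_minimal)

lemma span_X1_X3: "span {X1, X3} = {x. x$2 = 0}"
proof
  show "span {X1, X3} \<subseteq> {x. x$2 = 0}"
    by (rule span_minimal) (auto simp: subspace_def)
  show "{x. x$2 = 0} \<subseteq> span {X1, X3}"
  proof
    fix x :: "real^3"
    assume "x \<in> {x. x$2 = 0}"
    then have "x = x$1 *\<^sub>R X1 + x$3 *\<^sub>R X3" by (simp add: vec_eq_iff forall_3)
    also have "\<dots> \<in> span {X1, X3}" by (intro span_add span_mul span_base) auto
    finally show "x \<in> span {X1, X3}" .
  qed
qed

lemma span_X1_add_X2_X3: "span {X1 + X2, X3} = {x. x$1 = x$2}"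
proof
  show "span {X1 + X2, X3} \<subseteq> {x. x$1 = x$2}"
    by (rule span_minimal) (auto simp: subspace_def)
  show "{x. x$1 = x$2} \<subseteq> span {X1 + X2, X3}"
  proof
    fix x :: "real^3"
    assume "x \<in> {x. x$1 = x$2}"
    then have "x = x$1 *\<^sub>R (X1 + X2) + x$3 *\<^sub>R X3" by (simp add: vec_eq_iff forall_3)
    also have "\<dots> \<in> span {X1 + X2, X3}" by (intro span_add span_mul span_base) auto
    finally show "x \<in> span {X1 + X2, X3}" .
  qed
qed

lemma heis_codim1_subalgebra_contains_X3:
  assumes "codim1_subalgebra heis_br H"
  shows "X3 \<in> H"
proof -
  have sH: "subspace H" and dH: "dim H = 2" and closed: "\<And>u v. u \<in> H \<Longrightarrow> v \<in> H \<Longrightarrow> heis_br u v \<in> H"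
    using assms unfolding codim1_subalgebra_def by auto
  obtain n :: "real^3" where n0: "n \<noteq> 0" and Hsub: "span H \<subseteq> {x. n \<bullet> x = 0}"
    using lowdim_subset_hyperplane[of H] dH by auto
  have "H = {x. n \<bullet> x = 0}"
  proof (rule subspace_dim_equal[OF sH])
    show "subspace {x. n \<bullet> x = 0}" by (rule subspace_hyperplane)
    show "H \<subseteq> {x. n \<bullet> x = 0}" using Hsub span_superset by blast
    show "dim {x. n \<bullet> x = 0} \<le> dim H" using dim_hyperplane[OF n0] dH by simp
  qed
  then have H: "x \<in> H \<longleftrightarrow> n$1 * x$1 + n$2 * x$2 + n$3 * x$3 = 0" for x
    by (simp add: inner_vec_def sum_3)
  have "n$3 = 0"
  proof (rule ccontr)
    assume "n$3 \<noteq> 0"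
    define u :: "real^3" where "u = vector [n$3, 0, -n$1]"
    define v :: "real^3" where "v = vector [0, n$3, -n$2]"
    have "u \<in> H" "v \<in> H" unfolding H u_def v_def by (simp_all add: algebra_simps)
    then have "heis_br u v \<in> H" by (rule closed)
    then have "n$3 * (n$3 * n$3) = 0" unfolding H u_def v_def by simp
    with \<open>n$3 \<noteq> 0\<close> show False by simp
  qed
  then show ?thesis by (simp add: H)
qed

lemma heis_codim1_subalgebra_not_central:
  assumes "codim1_subalgebra heis_br H"
  obtains a where "a \<in> H" and "a \<notin> span {X3}"
proof -
  have "\<not> H \<subseteq> span {X3}"
  proof
    assume "H \<subseteq> span {X3}"
    then have "dim H \<le> dim (span {X3})" by (rule dim_subset)
    moreover have "dim H = 2" using assms unfolding codim1_subalgebra_def by simp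
    ultimately show False by (simp add: dim_span)
  qed
  with that show thesis by blast
qed

lemma heis_br_nonzero:
  assumes "subspace H" and "X3 \<in> H" and "u \<in> H" and "u \<notin> span {X3}" and "v \<notin> H"
  shows "heis_br u v \<noteq> 0"
proof
  assume "heis_br u v = 0"
  then have uv: "u$1 * v$2 = u$2 * v$1"
    using heis_br_components(3)[of u v] by simp
  define N where "N = u$1 * u$1 + u$2 * u$2"
  have "N \<noteq> 0" using assms(4) unfolding N_def span_X3 by (simp add: sum_squares_eq_zero_iff)
  define c where "c = (u$1 * v$1 + u$2 * v$2) / N"
  have "(v - c *\<^sub>R u)$1 * N = u$2 * (u$2 * v$1 - u$1 * v$2)"
    and "(v - c *\<^sub>R u)$2 * N = u$1 * (u$1 * v$2 - u$2 * v$1)"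
    using \<open>N \<noteq> 0\<close> unfolding c_def N_def by (simp_all add: field_simps)
  with uv \<open>N \<noteq> 0\<close> have "(v - c *\<^sub>R u)$1 = 0" "(v - c *\<^sub>R u)$2 = 0"
    by (simp_all add: mult.commute)
  then have "v - c *\<^sub>R u \<in> span {X3}" by (simp add: span_X3)
  then have "v - c *\<^sub>R u \<in> H"
    using span_X3_subset[OF assms(1,2)] by blast
  then have "(v - c *\<^sub>R u) + c *\<^sub>R u \<in> H"
    using assms(1,3) by (intro subspace_add subspace_mul) auto
  with assms(5) show False by simp
qed

section \<open>Frames and normal forms\<close>

lemma kundt_equivalent_by_inverse:
  fixes \<psi> :: "'a::euclidean_space \<Rightarrow> 'a"
  assumes aut: "lie_automorphism br \<psi>" and pre: "\<psi> -` H = H0"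
    and form: "\<And>x y. g (\<psi> x) (\<psi> y) = g0 x y"
  shows "kundt_equivalent br H g H0 g0"
proof -
  have lin: "linear \<psi>" and bij: "bij \<psi>" and hom: "\<And>u v. \<psi> (br u v) = br (\<psi> u) (\<psi> v)"
    using aut unfolding lie_automorphism_def by auto
  have right: "\<psi> (inv \<psi> y) = y" and left: "inv \<psi> (\<psi> y) = y" for y
    using bij by (simp_all add: bij_is_surj surj_f_inv_f bij_is_inj)
  have "lie_automorphism br (inv \<psi>)"
    unfolding lie_automorphism_def
    using inj_linear_imp_inv_linear[OF lin bij_is_inj[OF bij]] bij_imp_bij_inv[OF bij]
    by (metis hom left right)
  moreover have "inv \<psi> ` H = H0"
    using pre bij by (simp add: bij_vimage_eq_inv_image)
  moreover have "g0 (inv \<psi> u) (inv \<psi> v) = g u v" for u v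
    using form right by metis
  ultimately show ?thesis unfolding kundt_equivalent_def by blast
qed

definition heis_frame :: "real^3 \<Rightarrow> real^3 \<Rightarrow> real^3 \<Rightarrow> real^3" where
  "heis_frame p q x = x$1 *\<^sub>R p + x$2 *\<^sub>R q + x$3 *\<^sub>R heis_br p q"

lemma linear_heis_frame: "linear (heis_frame p q)"
  by (rule linearI) (simp_all add: heis_frame_def algebra_simps)

lemma heis_br_heis_frame:
  "heis_br p (heis_frame p q x) = x$2 *\<^sub>R heis_br p q"
  "heis_br (heis_frame p q x) q = x$1 *\<^sub>R heis_br p q"
  by (simp_all add: vec_eq_iff forall_3 heis_frame_def algebra_simps)

lemma lie_automorphism_heis_frame:
  assumes "heis_br p q \<noteq> 0"
  shows "lie_automorphism heis_br (heis_frame p q)"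
proof -
  have "x = 0" if "heis_frame p q x = 0" for x
  proof -
    have "x$2 = 0" "x$1 = 0"
      using heis_br_heis_frame[of p q x] that assms by (simp_all add: heis_br_def)
    with that assms have "x$3 = 0" by (simp add: heis_frame_def)
    with \<open>x$1 = 0\<close> \<open>x$2 = 0\<close> show "x = 0" by (simp add: vec_eq_iff forall_3)
  qed
  then have inj: "inj (heis_frame p q)"
    using linear_injective_0[OF linear_heis_frame] by blast
  then have "surj (heis_frame p q)"
    by (simp add: linear_injective_imp_surjective[OF linear_heis_frame])
  moreover have "heis_frame p q (heis_br u v) = heis_br (heis_frame p q u) (heis_frame p q v)" for u v
    by (simp add: vec_eq_iff forall_3 heis_frame_def algebra_simps)
  ultimately show ?thesis
    unfolding lie_automorphism_def using linear_heis_frame inj by (auto intro: bijI)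
qed

lemma heis_frame_form:
  assumes "sym_bilinear g"
  shows "g (heis_frame p q x) (heis_frame p q y) =
    x$1 * y$1 * g p p + x$2 * y$2 * g q q + x$3 * y$3 * g (heis_br p q) (heis_br p q)
    + (x$1 * y$2 + x$2 * y$1) * g p q + (x$1 * y$3 + x$3 * y$1) * g p (heis_br p q)
    + (x$2 * y$3 + x$3 * y$2) * g q (heis_br p q)"
  by (simp add: heis_frame_def sym_bilinear_simps[OF assms] algebra_simps)

lemma heis_frame_mem_iff:
  assumes "subspace H" and "X3 \<in> H"
  shows "heis_frame p q x \<in> H \<longleftrightarrow> x$1 *\<^sub>R p + x$2 *\<^sub>R q \<in> H"
proof -
  have "x$3 *\<^sub>R heis_br p q \<in> H"
    using span_X3_subset[OF assms] heis_br_in_span_X3 assms(1) by (blast intro: subspace_mul)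
  then show ?thesis
    using assms(1) subspace_add[OF assms(1)] subspace_diff[OF assms(1)]
    unfolding heis_frame_def by (metis add_diff_cancel_right')
qed

lemma kundt_equivalent_form2_frame:
  assumes sb: "sym_bilinear g" and sH: "subspace H" and "X3 \<in> H"
    and "p \<in> H" and "p \<notin> span {X3}" and "q \<notin> H"
    and pp: "g p p = 1" and pq: "g p q = 0" and qq: "g q q = 0"
    and pr: "g p (heis_br p q) = 0" and rr: "g (heis_br p q) (heis_br p q) = 0"
    and qr: "g q (heis_br p q) \<noteq> 0"
  shows "kundt_equivalent heis_br H g (span {X1, X3}) form2"
proof -
  txt \<open>Replacing p by -p changes the sign of g(q,[p,q]) and rescaling q multiplies it by a
    positive factor, so it can be normalised to 1.\<close>
  define K where "K = g q (heis_br p q)"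
  define \<epsilon> where "\<epsilon> = sgn K"
  define \<kappa> where "\<kappa> = 1 / sqrt \<bar>K\<bar>"
  have "K \<noteq> 0" using qr unfolding K_def .
  then have \<epsilon>: "\<epsilon> * \<epsilon> = 1" "\<epsilon> * K = \<bar>K\<bar>" and \<kappa>: "\<kappa> * \<kappa> * \<bar>K\<bar> = 1" "\<kappa> \<noteq> 0"
    unfolding \<epsilon>_def \<kappa>_def by (auto simp: sgn_if)
  note gs = sym_bilinear_simps[OF sb]
  have r: "heis_br (\<epsilon> *\<^sub>R p) (\<kappa> *\<^sub>R q) = (\<epsilon> * \<kappa>) *\<^sub>R heis_br p q"
    by (rule heis_br_scaleR)
  have "heis_br p q \<noteq> 0" using heis_br_nonzero assms(2-6) by blast
  with \<epsilon> \<kappa> have "heis_br (\<epsilon> *\<^sub>R p) (\<kappa> *\<^sub>R q) \<noteq> 0" unfolding r by auto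
  then show ?thesis
  proof (rule kundt_equivalent_by_inverse[OF lie_automorphism_heis_frame])
    have "heis_frame (\<epsilon> *\<^sub>R p) (\<kappa> *\<^sub>R q) x \<in> H \<longleftrightarrow> x \<in> span {X1, X3}" for x
    proof -
      have "heis_frame (\<epsilon> *\<^sub>R p) (\<kappa> *\<^sub>R q) x \<in> H \<longleftrightarrow> (x$1 * \<epsilon>) *\<^sub>R p + (x$2 * \<kappa>) *\<^sub>R q \<in> H"
        using heis_frame_mem_iff[OF sH \<open>X3 \<in> H\<close>] by simp
      also have "\<dots> \<longleftrightarrow> x$2 = 0"
        using subspace_add_scaleR_mem_iff[OF sH \<open>p \<in> H\<close> \<open>q \<notin> H\<close>] \<kappa> by simp
      finally show ?thesis by (simp add: span_X1_X3)
    qed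
    then show "heis_frame (\<epsilon> *\<^sub>R p) (\<kappa> *\<^sub>R q) -` H = span {X1, X3}" by auto
    have "g (\<kappa> *\<^sub>R q) (heis_br (\<epsilon> *\<^sub>R p) (\<kappa> *\<^sub>R q)) = \<kappa> * \<kappa> * (\<epsilon> * K)"
      unfolding r K_def by (simp add: gs)
    with \<epsilon> \<kappa> have "g (\<kappa> *\<^sub>R q) (heis_br (\<epsilon> *\<^sub>R p) (\<kappa> *\<^sub>R q)) = 1" by simp
    with \<epsilon> show "g (heis_frame (\<epsilon> *\<^sub>R p) (\<kappa> *\<^sub>R q) x) (heis_frame (\<epsilon> *\<^sub>R p) (\<kappa> *\<^sub>R q) y) = form2 x y"
      for x y
      unfolding heis_frame_form[OF sb] form2_def r by (simp add: gs pp pq qq pr rr algebra_simps)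
  qed
qed

lemma kundt_equivalent_form1_null_frame:
  assumes sb: "sym_bilinear g" and sH: "subspace H" and "X3 \<in> H"
    and "e \<in> H" and "e \<notin> span {X3}" and "f \<notin> H"
    and ee: "g e e = 0" and ff: "g f f = 0" and ef: "g e f = 1"
    and ez: "g e X3 = 0" and fz: "g f X3 = 0" and zz: "g X3 X3 > 0"
  shows "\<exists>\<mu>>0. kundt_equivalent heis_br H g (span {X1 + X2, X3}) (form1 \<mu>)"
proof -
  define p where "p = e + (1/2) *\<^sub>R f"
  define q where "q = e - (1/2) *\<^sub>R f"
  note gs = sym_bilinear_simps[OF sb]
  have "heis_br e f \<noteq> 0" using heis_br_nonzero assms(2-6) by blast
  then obtain c where c: "heis_br e f = c *\<^sub>R X3" "c \<noteq> 0" by (auto simp: heis_br_def)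
  have "heis_br p q = - heis_br e f"
    unfolding p_def q_def by (simp add: vec_eq_iff forall_3 algebra_simps)
  with c(1) have r: "heis_br p q = (- c) *\<^sub>R X3" by simp
  have "g (heis_br p q) (heis_br p q) = (c * c) * g X3 X3"
    unfolding r by (simp add: gs)
  with zz c(2) have "g (heis_br p q) (heis_br p q) > 0" by (metis mult_pos_pos not_real_square_gt_zero)
  moreover have "kundt_equivalent heis_br H g (span {X1 + X2, X3}) (form1 (g (heis_br p q) (heis_br p q)))"
  proof (rule kundt_equivalent_by_inverse[OF lie_automorphism_heis_frame])
    show "heis_br p q \<noteq> 0" unfolding r using c(2) by simp
    have "heis_frame p q x \<in> H \<longleftrightarrow> x \<in> span {X1 + X2, X3}" for x
    proof -
      have "x$1 *\<^sub>R p + x$2 *\<^sub>R q = (x$1 + x$2) *\<^sub>R e + ((x$1 - x$2) / 2) *\<^sub>R f"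
        unfolding p_def q_def by (simp add: vec_eq_iff field_simps)
      then have "heis_frame p q x \<in> H \<longleftrightarrow> (x$1 - x$2) / 2 = 0"
        using heis_frame_mem_iff[OF sH \<open>X3 \<in> H\<close>]
          subspace_add_scaleR_mem_iff[OF sH \<open>e \<in> H\<close> \<open>f \<notin> H\<close>] by simp
      then show ?thesis by (simp add: span_X1_add_X2_X3)
    qed
    then show "heis_frame p q -` H = span {X1 + X2, X3}" by auto
    show "g (heis_frame p q x) (heis_frame p q y) = form1 (g (heis_br p q) (heis_br p q)) x y" for x y
      using ez fz unfolding heis_frame_form[OF sb] r
      by (simp add: form1_def p_def q_def gs ee ff ef algebra_simps)
  qed
  ultimately show ?thesis by blast
qed

lemma null_centre_unit_vector:
  assumes L: "lorentzian g" and cs: "codim1_subalgebra heis_br H" and z: "X3 \<in> orth_compl g H"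
  obtains p where "p \<in> H" and "p \<notin> span {X3}" and "g p p = 1"
proof -
  have sb: "sym_bilinear g" using L unfolding lorentzian_def by blast
  note gs = sym_bilinear_simps[OF sb]
  have sH: "subspace H" using cs unfolding codim1_subalgebra_def by blast
  have zH: "X3 \<in> H" using heis_codim1_subalgebra_contains_X3[OF cs] .
  have zperp: "g X3 h = 0" if "h \<in> H" for h using z that unfolding orth_compl_def by blast
  obtain a where aH: "a \<in> H" and a: "a \<notin> span {X3}"
    using heis_codim1_subalgebra_not_central[OF cs] .
  have "g a a > 0"
  proof (rule ccontr)
    assume "\<not> g a a > 0"
    then have "a \<in> span {X3}"
      using zperp[OF aH] zperp[OF zH]
      by (intro lorentzian_causal_orthogonal_in_span[OF L]) (simp_all add: gs)
    with a show False ..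
  qed
  define p where "p = (1 / sqrt (g a a)) *\<^sub>R a"
  have "p \<in> H" unfolding p_def using sH aH by (rule subspace_mul)
  moreover have "a = sqrt (g a a) *\<^sub>R p" unfolding p_def using \<open>g a a > 0\<close> by simp
  then have "p \<notin> span {X3}" using a span_mul by metis
  moreover have "g p p = 1" unfolding p_def using \<open>g a a > 0\<close> by (simp add: gs)
  ultimately show thesis by (rule that)
qed

lemma central_radical_frame:
  assumes L: "lorentzian g" and cs: "codim1_subalgebra heis_br H"
    and "e \<in> span {X3}" and "e \<noteq> 0" and "e \<in> orth_compl g H"
  obtains p q where "p \<in> H" and "p \<notin> span {X3}" and "q \<notin> H"
    and "g p p = 1" and "g p q = 0" and "g q q = 0"
    and "g p (heis_br p q) = 0" and "g (heis_br p q) (heis_br p q) = 0" and "g q (heis_br p q) \<noteq> 0"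
proof -
  have sb: "sym_bilinear g" and bl: "bilinear g" and nd: "nondegenerate g"
    using L lorentzian_nondegenerate[OF L] unfolding lorentzian_def sym_bilinear_def by auto
  note gs = sym_bilinear_simps[OF sb]
  have sH: "subspace H" and dH: "dim H + 1 = DIM(real^3)"
    using cs unfolding codim1_subalgebra_def by auto
  have zH: "X3 \<in> H" using heis_codim1_subalgebra_contains_X3[OF cs] .
  obtain c where "c \<noteq> 0" and "e = c *\<^sub>R X3" using assms(3,4) by (auto simp: span_singleton)
  then have "X3 = (1 / c) *\<^sub>R e" by simp
  then have z: "X3 \<in> orth_compl g H"
    using subspace_mul[OF subspace_orth_compl[OF bl] assms(5)] by metis
  then have zperp: "g X3 h = 0" if "h \<in> H" for h using that unfolding orth_compl_def by blast
  have zz: "g X3 X3 = 0" using zperp zH .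
  obtain p where pH: "p \<in> H" and p: "p \<notin> span {X3}" and pp: "g p p = 1"
    using null_centre_unit_vector[OF L cs z] .
  obtain b where b: "b \<notin> H" using codim1_subalgebra_proper[OF cs] .
  define q0 where "q0 = b - g b p *\<^sub>R p"
  have q0: "q0 \<notin> H"
    using subspace_add_scaleR_mem_iff[OF sH pH b, of "- g b p" 1] unfolding q0_def by simp
  have "g X3 q0 \<noteq> 0"
    using nondegenerate_orth_compl_pairing[OF bl nd sH dH z _ q0] by simp
  define q where "q = q0 - (g q0 q0 / (2 * g q0 X3)) *\<^sub>R X3"
  have qq: "g q q = 0" unfolding q_def
    using sym_bilinear_null_shift[OF sb zz] \<open>g X3 q0 \<noteq> 0\<close> by (simp add: gs)
  have q: "q \<notin> H"
    using subspace_add_scaleR_mem_iff[OF sH zH q0, of "- (g q0 q0 / (2 * g q0 X3))" 1]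
    unfolding q_def by simp
  have pq: "g p q = 0" unfolding q_def q0_def using pp zperp[OF pH] by (simp add: gs)
  have qz: "g q X3 \<noteq> 0" unfolding q_def using zz \<open>g X3 q0 \<noteq> 0\<close> by (simp add: gs)
  have "heis_br p q \<noteq> 0" using heis_br_nonzero sH zH pH p q by blast
  then obtain c where c: "heis_br p q = c *\<^sub>R X3" "c \<noteq> 0" by (auto simp: heis_br_def)
  show thesis
  proof (rule that[OF pH p q pp pq qq])
    show "g p (heis_br p q) = 0" "g (heis_br p q) (heis_br p q) = 0"
      unfolding c(1) using zperp[OF pH] zz by (simp_all add: gs)
    show "g q (heis_br p q) \<noteq> 0"
      unfolding c(1) using c(2) qz by (simp add: gs)
  qed
qed

lemma non_central_radical_null_partner:
  assumes L: "lorentzian g" and cs: "codim1_subalgebra heis_br H"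
    and eH: "e \<in> H" and e: "e \<notin> span {X3}" and e_perp: "e \<in> orth_compl g H"
  obtains f where "f \<notin> H" and "g e e = 0" and "g f f = 0" and "g e f = 1"
    and "g e X3 = 0" and "g f X3 = 0" and "g X3 X3 > 0"
proof -
  have sb: "sym_bilinear g" and bl: "bilinear g" and nd: "nondegenerate g"
    using L lorentzian_nondegenerate[OF L] unfolding lorentzian_def sym_bilinear_def by auto
  note gs = sym_bilinear_simps[OF sb]
  have sH: "subspace H" and dH: "dim H + 1 = DIM(real^3)"
    using cs unfolding codim1_subalgebra_def by auto
  have zH: "X3 \<in> H" using heis_codim1_subalgebra_contains_X3[OF cs] .
  have eperp: "g e h = 0" if "h \<in> H" for h using e_perp that unfolding orth_compl_def by blast
  have ee: "g e e = 0" and ez: "g e X3 = 0" using eperp eH zH by auto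
  have zz: "g X3 X3 > 0"
  proof (rule ccontr)
    assume "\<not> g X3 X3 > 0"
    then have "e \<in> span {X3}"
      using ee ez by (intro lorentzian_causal_orthogonal_in_span[OF L]) simp_all
    with e show False ..
  qed
  obtain b where b: "b \<notin> H" using codim1_subalgebra_proper[OF cs] .
  define w where "w = b - (g b X3 / g X3 X3) *\<^sub>R X3"
  have w: "w \<notin> H"
    using subspace_add_scaleR_mem_iff[OF sH zH b, of "- (g b X3 / g X3 X3)" 1] unfolding w_def by simp
  have wz: "g w X3 = 0" unfolding w_def using zz by (simp add: gs)
  have "e \<noteq> 0" using e span_zero by metis
  then have ew: "g e w \<noteq> 0" using nondegenerate_orth_compl_pairing[OF bl nd sH dH e_perp _ w] by simp
  define f0 where "f0 = w - (g w w / (2 * g w e)) *\<^sub>R e"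
  define f where "f = (1 / g e w) *\<^sub>R f0"
  have "f0 \<notin> H"
    using subspace_add_scaleR_mem_iff[OF sH eH w, of "- (g w w / (2 * g w e))" 1] unfolding f0_def by simp
  then have "f \<notin> H"
    using subspace_add_scaleR_mem_iff[OF sH eH, of f0 0 "1 / g e w"] ew unfolding f_def by simp
  moreover have "g f f = 0"
    unfolding f_def using sym_bilinear_null_shift[OF sb ee, of w] ew by (simp add: gs f0_def)
  moreover have "g e f = 1" unfolding f_def f0_def using ee ew by (simp add: gs)
  moreover have "g f X3 = 0" unfolding f_def f0_def using ez wz by (simp add: gs)
  ultimately show thesis using that ee ez zz by blast
qed

theorem theorem5p3:
  fixes H :: "(real^3) set" and g :: "real^3 \<Rightarrow> real^3 \<Rightarrow> real"
  assumes "kundt_pair heis_br H g"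
  shows "(\<exists>\<mu>>0. kundt_equivalent heis_br H g (span {X1 + X2, X3}) (form1 \<mu>) \<or>
                 kundt_equivalent heis_br H g (span {X1 - X2, X3}) (form1 \<mu>)) \<or>
         kundt_equivalent heis_br H g (span {X1, X3}) form2"
proof -
  have L: "lorentzian g" and cs: "codim1_subalgebra heis_br H" and "degenerate_on g H"
    using assms unfolding kundt_pair_def by auto
  then obtain e where eH: "e \<in> H" and "e \<noteq> 0" and e_perp: "e \<in> orth_compl g H"
    unfolding degenerate_on_def orth_compl_def by blast
  have sb: "sym_bilinear g" using L unfolding lorentzian_def by blast
  have sH: "subspace H" using cs unfolding codim1_subalgebra_def by blast
  have zH: "X3 \<in> H" using heis_codim1_subalgebra_contains_X3[OF cs] .
  show ?thesis
  proof (cases "e \<in> span {X3}")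
    case True
    have "kundt_equivalent heis_br H g (span {X1, X3}) form2"
      using central_radical_frame[OF L cs True \<open>e \<noteq> 0\<close> e_perp]
        kundt_equivalent_form2_frame[OF sb sH zH] by blast
    then show ?thesis ..
  next
    case False
    have "\<exists>\<mu>>0. kundt_equivalent heis_br H g (span {X1 + X2, X3}) (form1 \<mu>)"
      using non_central_radical_null_partner[OF L cs eH False e_perp]
        kundt_equivalent_form1_null_frame[OF sb sH zH eH False] by blast
    then show ?thesis by blast
  qed
qed

end
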